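(* Let $n$ be a positive integer and let $u$ denote the unique positive real root of $$x^{2n} + x^{2n-1} + \cdots + x^{n} - x^{n-1} - x^{n-2} - \cdots - x - 1 = 0$$ (so $u\in(0,1)$). Then $$2\,\mathrm{Li}_2\!\left(u^{n+1}\right) - 2\,\mathrm{Li}_2\!\left(u^{n}\right) - \mathrm{Li}_2(u) - n^2 \log^2(u) = -\zeta(2).$$
   Context: $\mathrm{Li}_2(z)=\sum_{k\ge1} z^k/k^2$ for $|z|\le 1$ is the dilogarithm, $\log$ is the real natural logarithm, and $\zeta(2)=\pi^2/6$. *)

theory Defs
  imports "HOL-Analysis.Analysis"
begin

definition Li2 :: "real \<Rightarrow> real" where
  "Li2 z = (\<Sum>k. z ^ (k + 1) / (real (k + 1))^2)"

end

theory Submission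
  imports Defs
begin

text \<open>Put \<open>a = u\<^sup>n\<close>. Multiplying the equation by \<open>1 - u\<close> turns it into \<open>u a\<^sup>2 = 2a - 1\<close>,
  so \<open>u = (2a - 1)/a\<^sup>2\<close>, \<open>u\<^sup>n\<^sup>+\<^sup>1 = (2a - 1)/a\<close> and \<open>n\<^sup>2 log\<^sup>2 u = log\<^sup>2 a\<close>, with \<open>1/2 < a \<le> 1\<close>.
  The claim becomes a one-variable dilogarithm identity in \<open>a\<close>. Since
  \<open>Li\<^sub>2'(y) = -log(1 - y)/y\<close> and \<open>1 - (2a-1)/a\<^sup>2 = (1 - (2a-1)/a)\<^sup>2\<close>, the derivative of its
  left-hand side vanishes, and at \<open>a = 1\<close> the left-hand side is \<open>-Li\<^sub>2(1) = -\<zeta>(2)\<close>.\<close>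

lemma quadratic_if_balanced_geometric_sums:
  fixes u :: "'a::comm_ring_1"
  assumes "(\<Sum>k=n..2*n. u ^ k) = (\<Sum>k<n. u ^ k)"
  shows "u * (u ^ n)\<^sup>2 = 2 * u ^ n - 1"
proof -
  have "(\<Sum>k<Suc (2*n). u ^ k) = (\<Sum>k\<in>{..<n} \<union> {n..2*n}. u ^ k)"
    by (rule sum.cong) auto
  also have "\<dots> = (\<Sum>k<n. u ^ k) + (\<Sum>k=n..2*n. u ^ k)"
    by (rule sum.union_disjoint) auto
  finally have "(1 - u) * (\<Sum>k<Suc (2*n). u ^ k) = 2 * ((1 - u) * (\<Sum>k<n. u ^ k))"
    using assms by (simp add: algebra_simps)
  then have "1 - u ^ Suc (2*n) = 2 * (1 - u ^ n)"
    by (simp only: one_diff_power_eq)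
  then show ?thesis
    by (simp add: power_mult[symmetric] algebra_simps)
qed

lemma two_mult_minus_one_le_square: "2 * x - 1 \<le> (x::real)\<^sup>2"
  using sum_squares_ge_zero[of "x - 1" 0] by (simp add: power2_eq_square algebra_simps)

lemma Li2_1: "Li2 1 = pi\<^sup>2 / 6"
  using inverse_squares_sums unfolding Li2_def
  by (simp add: sums_iff add.commute)

lemma continuous_on_Li2: "continuous_on {-1..1} Li2"
proof -
  have "uniform_limit {-1..1} (\<lambda>n x. \<Sum>i<n. x ^ (i + 1) / (real (i + 1))\<^sup>2)
          (\<lambda>x. \<Sum>i. x ^ (i + 1) / (real (i + 1))\<^sup>2) sequentially"
  proof (rule Weierstrass_m_test)
    fix n and x :: real
    assume "x \<in> {-1..1}"
    then have "\<bar>x\<bar> ^ (n + 1) \<le> 1"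
      by (intro power_le_one) auto
    then show "norm (x ^ (n + 1) / (real (n + 1))\<^sup>2) \<le> 1 / (real (n + 1))\<^sup>2"
      by (simp add: abs_divide power_abs divide_right_mono del: power_Suc)
  next
    show "summable (\<lambda>n. 1 / (real (n + 1))\<^sup>2)"
      using inverse_squares_sums by (simp add: sums_iff add.commute)
  qed
  then show ?thesis
    unfolding Li2_def[abs_def]
    by (rule uniform_limit_theorem[rotated]) (auto intro!: always_eventually continuous_intros)
qed

lemma suminf_power_div_Suc:
  fixes z :: real
  assumes "\<bar>z\<bar> < 1" "z \<noteq> 0"
  shows "(\<Sum>n. z ^ n / real (n + 1)) = - ln (1 - z) / z"
proof -
  have summable: "summable (\<lambda>n. z ^ n / real (n + 1))"
  proof (rule summable_comparison_test)
    show "\<exists>N. \<forall>n\<ge>N. norm (z ^ n / real (n + 1)) \<le> \<bar>z\<bar> ^ n"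
      by (auto simp: abs_divide power_abs divide_le_eq mult_le_cancel_left1)
    show "summable (\<lambda>n. \<bar>z\<bar> ^ n)"
      using assms by simp
  qed
  have "ln (1 - z) = (\<Sum>n. (-1) ^ n * (1 / real (n + 1)) * ((1 - z) - 1) ^ Suc n)"
    using assms by (intro ln_series) auto
  also have "\<dots> = (\<Sum>n. - z * (z ^ n / real (n + 1)))"
    by (simp add: power_minus' algebra_simps)
  also have "\<dots> = - z * (\<Sum>n. z ^ n / real (n + 1))"
    using summable by (rule suminf_mult)
  finally show ?thesis
    using assms by (simp add: field_simps)
qed

lemma has_real_derivative_Li2:
  assumes "\<bar>y\<bar> < 1" "y \<noteq> 0"
  shows "(Li2 has_real_derivative - ln (1 - y) / y) (at y)"
proof -
  define c where "c n = (if n = 0 then 0 else 1 / (real n)\<^sup>2)" for n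
  have summable: "summable (\<lambda>n. c n * z ^ n)" if "norm z < 1" for z :: real
  proof (rule summable_comparison_test)
    have "\<bar>c n\<bar> \<le> 1" for n
      by (simp add: c_def)
    then show "\<exists>N. \<forall>n\<ge>N. norm (c n * z ^ n) \<le> \<bar>z\<bar> ^ n"
      by (auto simp: abs_mult power_abs intro!: mult_left_le_one_le)
    show "summable (\<lambda>n. \<bar>z\<bar> ^ n)"
      using that by simp
  qed
  have Li2_eq: "Li2 z = (\<Sum>n. c n * z ^ n)" if "norm z < 1" for z :: real
    using suminf_split_head[OF summable[OF that]] by (simp add: Li2_def c_def)
  have "diffs c n = 1 / real (n + 1)" for n
    by (simp add: diffs_def c_def power2_eq_square)
  then have "((\<lambda>z. \<Sum>n. c n * z ^ n) has_real_derivative - ln (1 - y) / y) (at y)"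
    using termdiffs_strong'[of 1 c y] summable suminf_power_div_Suc[OF assms] assms by simp
  then show ?thesis
    by (rule has_field_derivative_transform_within_open[of _ _ _ "{-1<..<1}"])
       (use assms Li2_eq in auto)
qed

lemma has_real_derivative_Li2_identity_lhs:
  fixes x :: real
  assumes "1/2 < x" "x < 1"
  shows "((\<lambda>x. 2 * Li2 ((2*x - 1) / x) - 2 * Li2 x - Li2 ((2*x - 1) / x\<^sup>2) - (ln x)\<^sup>2)
           has_real_derivative 0) (at x)"
proof -
  define L where "L = ln ((1 - x) / x)"
  have x: "0 < x" "x * (2*x - 1) \<noteq> 0"
    using assms by auto
  have "0 < (1 - x)\<^sup>2"
    using assms by simp
  then have ranges: "0 < (2*x - 1) / x" "(2*x - 1) / x < 1" "0 < (2*x - 1) / x\<^sup>2" "(2*x - 1) / x\<^sup>2 < 1"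
    using assms by (auto simp: field_simps power2_eq_square)
  have d1: "((\<lambda>x. Li2 ((2*x - 1) / x)) has_real_derivative - L / (x * (2*x - 1))) (at x)"
  proof -
    have "1 - (2*x - 1) / x = (1 - x) / x"
      using x by (simp add: field_simps)
    then have eq: "- ln (1 - (2*x - 1) / x) / ((2*x - 1) / x) * (1 / x\<^sup>2) = - L / (x * (2*x - 1))"
      using x by (simp add: L_def field_simps power2_eq_square)
    have inner: "((\<lambda>x. (2*x - 1) / x) has_real_derivative 1 / x\<^sup>2) (at x)"
      using x by (auto intro!: derivative_eq_intros simp: field_simps power2_eq_square)
    have outer: "(Li2 has_real_derivative - ln (1 - (2*x - 1) / x) / ((2*x - 1) / x)) (at ((2*x - 1) / x))"
      using ranges by (intro has_real_derivative_Li2) auto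
    show ?thesis
      using DERIV_chain2[OF outer inner] eq by simp
  qed
  have d2: "((\<lambda>x. Li2 ((2*x - 1) / x\<^sup>2)) has_real_derivative - 4 * (1 - x) * L / (x * (2*x - 1))) (at x)"
  proof -
    have "1 - (2*x - 1) / x\<^sup>2 = ((1 - x) / x)\<^sup>2"
      using x by (simp add: field_simps power2_eq_square)
    then have "ln (1 - (2*x - 1) / x\<^sup>2) = 2 * L"
      using assms by (simp add: L_def ln_realpow)
    then have eq: "- ln (1 - (2*x - 1) / x\<^sup>2) / ((2*x - 1) / x\<^sup>2) * (2 * (1 - x) / x ^ 3)
               = - 4 * (1 - x) * L / (x * (2*x - 1))"
      using x by (simp add: field_simps power2_eq_square power3_eq_cube)
    have inner: "((\<lambda>x. (2*x - 1) / x\<^sup>2) has_real_derivative 2 * (1 - x) / x ^ 3) (at x)"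
      using x by (auto intro!: derivative_eq_intros simp: field_simps power2_eq_square power3_eq_cube)
    have outer: "(Li2 has_real_derivative - ln (1 - (2*x - 1) / x\<^sup>2) / ((2*x - 1) / x\<^sup>2)) (at ((2*x - 1) / x\<^sup>2))"
      using ranges by (intro has_real_derivative_Li2) auto
    show ?thesis
      using DERIV_chain2[OF outer inner] eq by simp
  qed
  have d3: "(Li2 has_real_derivative - (L + ln x) / x) (at x)"
    using has_real_derivative_Li2[of x] assms by (simp add: L_def ln_div)
  have d4: "((\<lambda>x. (ln x)\<^sup>2) has_real_derivative 2 * ln x / x) (at x)"
    using x by (auto intro!: derivative_eq_intros)
  have "((\<lambda>x. 2 * Li2 ((2*x - 1) / x) - 2 * Li2 x - Li2 ((2*x - 1) / x\<^sup>2) - (ln x)\<^sup>2)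
          has_real_derivative 2 * (- L / (x * (2*x - 1))) - 2 * (- (L + ln x) / x)
            - (- 4 * (1 - x) * L / (x * (2*x - 1))) - 2 * ln x / x) (at x)"
    by (intro DERIV_diff DERIV_cmult d1 d2 d3 d4)
  moreover have "2 * (- L / (x * (2*x - 1))) - 2 * (- (L + ln x) / x)
        - (- 4 * (1 - x) * L / (x * (2*x - 1))) - 2 * ln x / x = 0"
    using x by (simp add: divide_simps) algebra
  ultimately show ?thesis
    by simp
qed

lemma Li2_identity:
  fixes a :: real
  assumes "1/2 \<le> a" "a \<le> 1"
  shows "2 * Li2 ((2*a - 1) / a) - 2 * Li2 a - Li2 ((2*a - 1) / a\<^sup>2) - (ln a)\<^sup>2 = - (pi\<^sup>2 / 6)"
proof -
  define F where "F x = 2 * Li2 ((2*x - 1) / x) - 2 * Li2 x - Li2 ((2*x - 1) / x\<^sup>2) - (ln x)\<^sup>2"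
    for x :: real
  have "F a = F 1"
  proof (cases "a = 1")
    case False
    have "continuous_on {a..1} F"
    proof -
      have "(\<lambda>x. (2*x - 1) / x) ` {a..1} \<subseteq> {-1..1}" "{a..1} \<subseteq> {-1..1}"
        using assms by (auto simp: field_simps)
      moreover have "(\<lambda>x. (2*x - 1) / x\<^sup>2) ` {a..1} \<subseteq> {-1..1}"
      proof clarsimp
        fix x :: real
        assume "a \<le> x" "x \<le> 1"
        then have "0 < x\<^sup>2" "0 \<le> (2*x - 1) / x\<^sup>2"
          using assms by auto
        then show "-1 \<le> (2*x - 1) / x\<^sup>2 \<and> (2*x - 1) / x\<^sup>2 \<le> 1"
          using two_mult_minus_one_le_square[of x] by (simp add: divide_le_eq)
      qed
      ultimately show ?thesis
        unfolding F_def[abs_def] using assms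
        by (intro continuous_intros continuous_on_compose2[OF continuous_on_Li2]
            continuous_on_subset[OF continuous_on_Li2]) auto
    qed
    moreover have "(F has_real_derivative 0) (at x)" if "a < x" "x < 1" for x
      unfolding F_def[abs_def] using that assms by (intro has_real_derivative_Li2_identity_lhs) auto
    ultimately show ?thesis
      using DERIV_isconst_end[of a 1 F] False assms by auto
  qed simp
  also have "F 1 = - (pi\<^sup>2 / 6)"
    by (simp add: F_def Li2_1)
  finally show ?thesis
    by (simp add: F_def)
qed

theorem theorem3p1:
  fixes n :: nat and u :: real
  assumes "n \<ge> 1"
    and "u > 0"
    and "(\<Sum>k=n..2*n. u ^ k) - (\<Sum>k<n. u ^ k) = 0"
  shows "2 * Li2 (u ^ (n + 1)) - 2 * Li2 (u ^ n) - Li2 u - (real n)^2 * (ln u)^2 = - (pi^2 / 6)"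
proof -
  define a where "a = u ^ n"
  have quadratic: "u * a\<^sup>2 = 2 * a - 1"
    unfolding a_def using assms(3) by (intro quadratic_if_balanced_geometric_sums) simp
  have "0 < a"
    using assms(2) by (simp add: a_def)
  have "0 < u * a\<^sup>2"
    using assms(2) \<open>0 < a\<close> by simp
  then have "1/2 < a"
    using quadratic by simp
  have "u * a\<^sup>2 \<le> 1 * a\<^sup>2"
    using quadratic two_mult_minus_one_le_square[of a] by simp
  then have "u \<le> 1"
    by (rule mult_right_le_imp_le) (use \<open>0 < a\<close> in simp)
  then have "a \<le> 1"
    using assms(2) by (simp add: a_def power_le_one)
  have "u = (2*a - 1) / a\<^sup>2"
    using quadratic \<open>0 < a\<close> by (simp add: eq_divide_eq)
  moreover have "u ^ (n + 1) = (2*a - 1) / a"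
    using quadratic \<open>0 < a\<close> by (simp add: a_def eq_divide_eq power2_eq_square mult.assoc)
  moreover have "(real n)\<^sup>2 * (ln u)\<^sup>2 = (ln a)\<^sup>2"
    using assms(2) by (simp add: a_def ln_realpow power_mult_distrib)
  ultimately show ?thesis
    using Li2_identity[OF less_imp_le[OF \<open>1/2 < a\<close>] \<open>a \<le> 1\<close>] by (simp add: a_def)
qed

end
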